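(* For every integer $n\ge 1$, the unitary group $\mathfrak U(n)$ of $n\times n$ complex unitary matrices, as a compact group with its normalized Haar measure, has a dense subgroup that is not Haar measurable. *)

theory Defs
  imports "HOL-Analysis.Analysis" "HOL-Algebra.Group"
begin

definition cadj :: "complex^'n^'n \<Rightarrow> complex^'n^'n" where
  "cadj A = (\<chi> i j. cnj (A $ j $ i))"

definition unitary_matrices :: "(complex^'n^'n) set" where
  "unitary_matrices = {A. A ** cadj A = mat 1 \<and> cadj A ** A = mat 1}"

definition unitary_group :: "(complex^'n^'n) monoid" where
  "unitary_group = \<lparr>carrier = unitary_matrices, mult = (**), one = mat 1\<rparr>"

definition haar_measure_U :: "(complex^'n^'n) measure \<Rightarrow> bool" where
  "haar_measure_U \<mu> \<longleftrightarrow>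
     sets \<mu> = sets (restrict_space borel unitary_matrices) \<and>
     space \<mu> = unitary_matrices \<and>
     emeasure \<mu> (space \<mu>) = 1 \<and>
     (\<forall>g\<in>unitary_matrices. \<forall>A\<in>sets \<mu>.
        emeasure \<mu> ((\<lambda>x. g ** x) ` A) = emeasure \<mu> A)"

end

theory Submission
  imports Defs
begin

text \<open>Choose a \<rat>-linear hyperplane V of \<real> that contains \<rat> and is complemented by \<rat>b, and let H
  be the set of unitary matrices whose determinant is cis2pi v = exp (2\<pi>iv) for some v \<in> V.
  H is a subgroup, and it is dense: scaling a unitary matrix by scalars of modulus one moves its
  determinant around the whole circle, in particular through the dense set cis2pi ` \<rat>. The
  translates of H by the scalar matrices of determinant cis2pi (qb), q \<in> \<rat>, are pairwise disjoint
  and cover U(n). As for Vitali's set, a measurable H would therefore have countably many disjoint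
  translates of equal measure, forcing measure zero, which nevertheless cover a probability space.\<close>

lemma suminf_const_ennreal_eq_0:
  assumes "(\<Sum>k::nat. c) \<noteq> (\<infinity> :: ennreal)"
  shows "c = 0"
proof (rule ccontr)
  assume "c \<noteq> 0"
  have "\<not> summable (\<lambda>_::nat. 1::real)"
    using summable_LIMSEQ_zero LIMSEQ_const_iff zero_neq_one by metis
  then have "(\<Sum>k::nat. 1::ennreal) = \<infinity>"
    using summable_suminf_not_top[of "\<lambda>_. 1"] by auto
  then have "(\<Sum>k::nat. c) = \<infinity>"
    using ennreal_suminf_cmult[of c "\<lambda>_. 1"] \<open>c \<noteq> 0\<close> by (simp add: ennreal_mult_top)
  with assms show False by contradiction
qed

lemma emeasure_eq_0_if_disjoint_copies:
  fixes D :: "'i::countable \<Rightarrow> 'a set"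
  assumes "infinite (UNIV :: 'i set)" "emeasure M (space M) \<noteq> \<infinity>"
    and "range D \<subseteq> sets M" "disjoint_family D" "\<And>i. emeasure M (D i) = emeasure M A"
  shows "emeasure M A = 0"
proof (rule suminf_const_ennreal_eq_0)
  obtain e :: "nat \<Rightarrow> 'i" where "inj e"
    using bij_betw_from_nat_into[OF countableI_type assms(1)] bij_betw_def by blast
  then have disj: "disjoint_family (\<lambda>k. D (e k))"
    unfolding disjoint_family_on_def
    using disjoint_family_onD[OF assms(4) UNIV_I UNIV_I] by (metis injD)
  have sets: "range (\<lambda>k. D (e k)) \<subseteq> sets M"
    using assms(3) by auto
  have "(\<Sum>k. emeasure M A) = emeasure M (\<Union>k. D (e k))"
    using suminf_emeasure[OF sets disj] assms(5) by simp
  also have "\<dots> \<le> emeasure M (space M)"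
    using assms(3) by (intro emeasure_mono) (auto dest: sets.sets_into_space)
  finally show "(\<Sum>k. emeasure M A) \<noteq> \<infinity>"
    using assms(2) by (auto simp: top_unique)
qed

lemma translates_partition_not_in_completion:
  fixes M :: "'a measure" and T :: "'i::countable \<Rightarrow> 'a \<Rightarrow> 'a"
  assumes "infinite (UNIV :: 'i set)"
    and "emeasure M (space M) \<noteq> 0" "emeasure M (space M) \<noteq> \<infinity>"
    and T_sets: "\<And>i A. A \<in> sets M \<Longrightarrow> T i ` A \<in> sets M"
    and T_emeasure: "\<And>i A. A \<in> sets M \<Longrightarrow> emeasure M (T i ` A) = emeasure M A"
    and disjoint: "disjoint_family (\<lambda>i. T i ` H)"
    and cover: "space M \<subseteq> (\<Union>i. T i ` H)"
  shows "H \<notin> sets (completion M)"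
proof
  assume "H \<in> sets (completion M)"
  then obtain S N N' where H: "H = S \<union> N" "N \<subseteq> N'" "N' \<in> null_sets M" "S \<in> sets M"
    by (rule sets_completionE)
  have "disjoint_family (\<lambda>i. T i ` S)"
    by (rule disjoint_family_subset[OF disjoint]) (auto simp: H(1))
  then have "emeasure M S = 0"
    using assms(1,3) T_sets T_emeasure H(4) by (intro emeasure_eq_0_if_disjoint_copies[where D = "\<lambda>i. T i ` S"]) auto
  then have "S \<union> N' \<in> null_sets M"
    using H(3,4) by (auto intro: null_setsI)
  then have "(\<Union>i. T i ` (S \<union> N')) \<in> null_sets M"
    using T_sets T_emeasure by (intro null_sets_UN) (auto simp: null_sets_def)
  moreover have "space M \<subseteq> (\<Union>i. T i ` (S \<union> N'))"
    using cover H(1,2) by blast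
  ultimately have "emeasure M (space M) = 0"
    by (meson emeasure_eq_0 null_setsD1 null_setsD2 sets.top)
  with assms(2) show False by contradiction
qed

interpretation Q: vector_space "\<lambda>q::rat. \<lambda>x::real. of_rat q * x"
  by unfold_locales (auto simp: algebra_simps of_rat_add of_rat_mult)

lemma rational_hyperplane_exists:
  obtains V :: "real set" and b :: real
  where "Q.subspace V" "1 \<in> V" "b \<notin> V" "Q.span (insert b V) = UNIV"
proof -
  have "Q.independent {1::real}"
    by (simp add: Q.independent_insert)
  then obtain B where B: "{1} \<subseteq> B" "Q.independent B" "UNIV \<subseteq> Q.span B"
    by (rule Q.maximal_independent_subset_extend[OF subset_UNIV])
  have "\<not> B \<subseteq> {1}"
  proof
    assume "B \<subseteq> {1}"
    then have "UNIV \<subseteq> Q.span {1}"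
      using B(3) Q.span_mono by blast
    then have "UNIV \<subseteq> range (\<lambda>q. of_rat q :: real)"
      by (simp add: Q.span_singleton)
    then show False
      by (metis countable_image countableI_type countable_subset uncountable_UNIV_real)
  qed
  then obtain b where b: "b \<in> B" "b \<noteq> 1" by blast
  show thesis
  proof
    show "Q.subspace (Q.span (B - {b}))" by (rule Q.subspace_span)
    show "1 \<in> Q.span (B - {b})" using B b by (intro Q.span_base) auto
    show "b \<notin> Q.span (B - {b})"
      using B(2) b(1) unfolding Q.dependent_def by blast
    have "B \<subseteq> insert b (B - {b})"
      by blast
    also have "\<dots> \<subseteq> insert b (Q.span (B - {b}))"
      using Q.span_superset by (rule insert_mono)
    finally have "Q.span B \<subseteq> Q.span (insert b (Q.span (B - {b})))"
      by (rule Q.span_mono)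
    then show "Q.span (insert b (Q.span (B - {b}))) = UNIV"
      using B(3) by blast
  qed
qed

definition cis2pi :: "real \<Rightarrow> complex" where
  "cis2pi t = cis (2 * pi * t)"

lemma cis2pi_add: "cis2pi s * cis2pi t = cis2pi (s + t)"
  by (simp add: cis2pi_def cis_mult distrib_left)

lemma cis2pi_0 [simp]: "cis2pi 0 = 1"
  by (simp add: cis2pi_def)

lemma norm_cis2pi [simp]: "cmod (cis2pi t) = 1"
  by (simp add: cis2pi_def)

lemma cnj_cis2pi: "cnj (cis2pi t) = cis2pi (- t)"
  by (simp add: cis2pi_def cis_cnj)

lemma cis2pi_power: "cis2pi t ^ n = cis2pi (real n * t)"
  by (simp add: cis2pi_def Complex.DeMoivre mult_ac)

lemma continuous_on_cis2pi: "continuous_on UNIV cis2pi"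
  unfolding cis2pi_def cis_conv_exp by (intro continuous_intros)

lemma cis2pi_eq_imp_diff_Ints:
  assumes "cis2pi s = cis2pi t"
  shows "s - t \<in> \<int>"
proof -
  have "exp (\<i> * complex_of_real (2 * pi * (s - t))) = 1"
    using cis2pi_add[of s "- t"] cis2pi_add[of t "- t"] assms by (simp add: cis2pi_def cis_conv_exp)
  then obtain n :: int where "2 * pi * (s - t) = of_int (2 * n) * pi"
    unfolding exp_eq_1 by auto
  then show ?thesis by simp
qed

lemma norm_1_imp_cis2pi:
  assumes "cmod z = 1"
  obtains t where "z = cis2pi t"
proof
  have "z \<noteq> 0"
    using assms by auto
  then show "z = cis2pi (Arg z / (2 * pi))"
    using assms by (simp add: cis2pi_def cis_Arg sgn_div_norm)
qed

lemma cadj_cadj [simp]: "cadj (cadj A) = A"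
  by (simp add: cadj_def vec_eq_iff)

lemma cadj_mult: "cadj (A ** B) = cadj B ** cadj A"
  by (simp add: cadj_def vec_eq_iff matrix_matrix_mult_def cnj_sum mult.commute)

lemma cadj_mat: "cadj (mat c) = mat (cnj c)"
  by (simp add: cadj_def vec_eq_iff mat_def)

lemma det_cadj: "det (cadj A) = cnj (det A)"
proof -
  have "cadj A = transpose (\<chi> i j. cnj (A $ i $ j))"
    by (simp add: cadj_def transpose_def vec_eq_iff)
  then show ?thesis
    by (simp only: det_transpose) (simp add: det_def cnj_sum cnj_prod)
qed

lemma mat_mult_left: "(mat c :: 'a::comm_ring_1^'n^'n) ** A = (\<chi> i j. c * A $ i $ j)"
  by (simp add: vec_eq_iff matrix_matrix_mult_def mat_def if_distrib if_distribR cong: if_cong)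

lemma mat_mult_mat: "(mat c :: 'a::comm_ring_1^'n^'n) ** mat d = mat (c * d)"
  unfolding mat_mult_left by (simp add: vec_eq_iff mat_def)

lemma det_mat: "det (mat c :: 'a::comm_ring_1^'n^'n) = c ^ CARD('n)"
  by (simp add: det_diagonal mat_def)

lemma unitary_mult:
  assumes "A \<in> unitary_matrices" "B \<in> unitary_matrices"
  shows "A ** B \<in> unitary_matrices"
proof -
  have "(A ** B) ** cadj (A ** B) = A ** (B ** cadj B) ** cadj A"
    "cadj (A ** B) ** (A ** B) = cadj B ** (cadj A ** A) ** B"
    by (simp_all add: cadj_mult matrix_mul_assoc)
  with assms show ?thesis
    by (simp add: unitary_matrices_def)
qed

lemma unitary_cadj: "A \<in> unitary_matrices \<Longrightarrow> cadj A \<in> unitary_matrices"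
  by (simp add: unitary_matrices_def)

lemma unitary_mat: "cmod c = 1 \<Longrightarrow> mat c \<in> unitary_matrices"
  by (simp add: unitary_matrices_def cadj_mat mat_mult_mat complex_norm_square[symmetric]
      mult.commute[of "cnj c"])

lemma norm_det_unitary:
  assumes "A \<in> unitary_matrices"
  shows "cmod (det A) = 1"
proof -
  have "A ** cadj A = mat 1"
    using assms by (simp add: unitary_matrices_def)
  then have "det A * cnj (det A) = 1"
    by (metis det_I det_cadj det_mul)
  then have "cmod (det A) ^ 2 = 1"
    by (metis complex_norm_square of_real_eq_1_iff)
  then show ?thesis
    using norm_ge_zero[of "det A"] by (simp add: power2_eq_1_iff)
qed

lemma unitary_group_inv:
  assumes "A \<in> unitary_matrices"
  shows "inv\<^bsub>unitary_group\<^esub> A = cadj A"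
  unfolding m_inv_def unitary_group_def
proof (simp, rule the_equality)
  show "cadj A \<in> unitary_matrices \<and> A ** cadj A = mat 1 \<and> cadj A ** A = mat 1"
    using assms by (simp add: unitary_matrices_def)
next
  fix B assume "B \<in> unitary_matrices \<and> A ** B = mat 1 \<and> B ** A = mat 1"
  then have "(cadj A ** A) ** B = cadj A"
    by (metis matrix_mul_assoc matrix_mul_rid)
  with assms show "B = cadj A"
    by (simp add: unitary_matrices_def)
qed

lemma unitary_left_translate_eq:
  fixes g :: "complex^'n^'n"
  assumes "g \<in> unitary_matrices" "A \<subseteq> unitary_matrices"
  shows "(\<lambda>x. g ** x) ` A = unitary_matrices \<inter> (\<lambda>y. cadj g ** y) -` A"
proof -
  have cancel: "cadj g ** (g ** x) = x" "g ** (cadj g ** x) = x" for x :: "complex^'n^'n"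
    using assms(1) by (simp_all add: matrix_mul_assoc unitary_matrices_def)
  show ?thesis
  proof (intro equalityI subsetI)
    fix y assume "y \<in> (\<lambda>x. g ** x) ` A"
    then show "y \<in> unitary_matrices \<inter> (\<lambda>y. cadj g ** y) -` A"
      using assms unitary_mult cancel(1) by auto
  next
    fix y assume "y \<in> unitary_matrices \<inter> (\<lambda>y. cadj g ** y) -` A"
    then show "y \<in> (\<lambda>x. g ** x) ` A"
      using cancel(2)[of y] by (metis IntD2 image_eqI vimageD)
  qed
qed

lemma haar_left_translate_sets:
  fixes g :: "complex^'n^'n"
  assumes "haar_measure_U \<mu>" "g \<in> unitary_matrices" "A \<in> sets \<mu>"
  shows "(\<lambda>x. g ** x) ` A \<in> sets \<mu>"
proof -
  let ?U = "restrict_space borel unitary_matrices :: (complex^'n^'n) measure"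
  have sets: "sets \<mu> = sets ?U"
    using assms(1) by (simp add: haar_measure_U_def)
  have "(\<lambda>y. cadj g ** y) \<in> borel_measurable borel"
    unfolding matrix_matrix_mult_def by (intro borel_measurable_continuous_onI continuous_intros)
  then have "(\<lambda>y. cadj g ** y) \<in> measurable ?U ?U"
    using unitary_mult[OF unitary_cadj[OF assms(2)]]
    by (intro measurable_restrict_space1 measurable_restrict_space2) (auto simp: space_restrict_space)
  moreover have "A \<in> sets ?U"
    using assms(3) sets by simp
  moreover from this have "A \<subseteq> unitary_matrices"
    using sets.sets_into_space by (fastforce simp: space_restrict_space)
  ultimately show ?thesis
    using measurable_sets[of _ ?U ?U A] sets
    by (simp add: unitary_left_translate_eq[OF assms(2)] space_restrict_space Int_commute)
qed

definition unitary_det_in :: "complex set \<Rightarrow> (complex^'n^'n) set" where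
  "unitary_det_in S = {U \<in> unitary_matrices. det U \<in> S}"

lemma unitary_det_in_mono: "S \<subseteq> T \<Longrightarrow> unitary_det_in S \<subseteq> unitary_det_in T"
  by (auto simp: unitary_det_in_def)

lemma subgroup_unitary_det_in:
  assumes "1 \<in> S" "\<And>x y. x \<in> S \<Longrightarrow> y \<in> S \<Longrightarrow> x * y \<in> S" "\<And>x. x \<in> S \<Longrightarrow> cnj x \<in> S"
  shows "subgroup (unitary_det_in S :: (complex^'n^'n) set) unitary_group"
proof
  show "unitary_det_in S \<subseteq> carrier unitary_group"
    by (auto simp: unitary_det_in_def unitary_group_def)
  show "\<one>\<^bsub>unitary_group\<^esub> \<in> (unitary_det_in S :: (complex^'n^'n) set)"
    using assms(1) unitary_mat[of 1] by (simp add: unitary_det_in_def unitary_group_def)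
  fix A B :: "complex^'n^'n"
  assume "A \<in> unitary_det_in S" "B \<in> unitary_det_in S"
  then show "A \<otimes>\<^bsub>unitary_group\<^esub> B \<in> unitary_det_in S"
    using assms(2) by (simp add: unitary_det_in_def unitary_group_def unitary_mult det_mul)
next
  fix A :: "complex^'n^'n"
  assume "A \<in> unitary_det_in S"
  then show "inv\<^bsub>unitary_group\<^esub> A \<in> unitary_det_in S"
    using assms(3) by (simp add: unitary_det_in_def unitary_group_inv unitary_cadj det_cadj)
qed

definition scalar_unitary :: "real \<Rightarrow> complex^'n^'n" where
  "scalar_unitary t = mat (cis2pi (t / CARD('n)))"

lemma scalar_unitary_unitary: "scalar_unitary t \<in> unitary_matrices"
  unfolding scalar_unitary_def by (simp add: unitary_mat)

lemma det_scalar_unitary: "det (scalar_unitary t :: complex^'n^'n) = cis2pi t"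
  by (simp add: scalar_unitary_def det_mat cis2pi_power)

lemma scalar_unitary_add:
  "scalar_unitary s ** scalar_unitary t = (scalar_unitary (s + t) :: complex^'n^'n)"
  by (simp add: scalar_unitary_def mat_mult_mat cis2pi_add add_divide_distrib)

lemma scalar_unitary_0 [simp]: "scalar_unitary 0 = mat 1"
  by (simp add: scalar_unitary_def)

lemma continuous_on_scalar_unitary_mult:
  "continuous_on UNIV (\<lambda>t. scalar_unitary t ** (U :: complex^'n^'n))"
  unfolding scalar_unitary_def mat_mult_left
  by (intro continuous_intros continuous_on_compose2[OF continuous_on_cis2pi]) auto

lemma unitary_matrices_subset_closure_det_in_Rats:
  "(unitary_matrices :: (complex^'n^'n) set) \<subseteq> closure (unitary_det_in (cis2pi ` \<rat>))"
proof
  fix U :: "complex^'n^'n"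
  assume U: "U \<in> unitary_matrices"
  then obtain \<theta> where \<theta>: "det U = cis2pi \<theta>"
    using norm_1_imp_cis2pi norm_det_unitary by metis
  define f where "f t = scalar_unitary (t - \<theta>) ** U" for t
  have "f ` \<rat> \<subseteq> unitary_det_in (cis2pi ` \<rat>)"
    using U by (auto simp: f_def unitary_det_in_def scalar_unitary_unitary unitary_mult det_mul
        det_scalar_unitary \<theta> cis2pi_add)
  moreover have "continuous_on UNIV f"
    unfolding f_def
    by (rule continuous_on_compose2[OF continuous_on_scalar_unitary_mult]) (auto intro: continuous_intros)
  ultimately have "f ` closure \<rat> \<subseteq> closure (unitary_det_in (cis2pi ` \<rat>))"
    using closure_subset by (intro image_closure_subset) (auto intro: continuous_on_subset)
  moreover have "f \<theta> = U"
    by (simp add: f_def)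
  ultimately show "U \<in> closure (unitary_det_in (cis2pi ` \<rat>))"
    by (auto simp: Rats_closure_real)
qed

context
  fixes V :: "real set" and b :: real
  assumes V: "Q.subspace V" "1 \<in> V" "b \<notin> V" "Q.span (insert b V) = UNIV"
begin

lemma Rats_subset_V: "\<rat> \<subseteq> V"
  using Q.subspace_scale[OF V(1,2)] by (auto simp: Rats_def)

lemma V_decompose: obtains v q where "v \<in> V" "x = v + of_rat q * b"
proof -
  have "x \<in> Q.span (insert b V)"
    using V(4) by simp
  then obtain q where "x - of_rat q * b \<in> V"
    by (auto simp: Q.span_insert Q.span_eq_iff[THEN iffD2, OF V(1)])
  then show thesis
    by (intro that[of "x - of_rat q * b" q]) auto
qed

lemma rat_mult_b_in_V_iff: "of_rat q * b \<in> V \<longleftrightarrow> q = 0"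
proof
  assume "of_rat q * b \<in> V"
  then have "of_rat (inverse q) * (of_rat q * b) \<in> V"
    by (rule Q.subspace_scale[OF V(1)])
  then show "q = 0"
    using V(3) by (cases "q = 0") (simp_all add: mult.assoc[symmetric] of_rat_mult[symmetric])
qed (simp add: Q.subspace_0[OF V(1)])

lemma subgroup_unitary_det_in_V:
  "subgroup (unitary_det_in (cis2pi ` V) :: (complex^'n^'n) set) unitary_group"
proof (rule subgroup_unitary_det_in)
  show "1 \<in> cis2pi ` V"
    using Q.subspace_0[OF V(1)] by (metis cis2pi_0 image_eqI)
qed (auto simp: cis2pi_add cnj_cis2pi intro: Q.subspace_add[OF V(1)] Q.subspace_neg[OF V(1)])

lemma translates_det_in_V_disjoint:
  assumes "q \<noteq> q'"
  shows "(\<lambda>x. scalar_unitary (of_rat q * b) ** x) ` unitary_det_in (cis2pi ` V) \<inter>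
         (\<lambda>x. scalar_unitary (of_rat q' * b) ** x) ` unitary_det_in (cis2pi ` V) =
         ({} :: (complex^'n^'n) set)"
proof (rule ccontr)
  assume "\<not> ?thesis"
  then obtain x y :: "complex^'n^'n"
    where "x \<in> unitary_det_in (cis2pi ` V)" "y \<in> unitary_det_in (cis2pi ` V)"
      and eq: "scalar_unitary (of_rat q * b) ** x = scalar_unitary (of_rat q' * b) ** y"
    by blast
  then obtain v w where vw: "v \<in> V" "w \<in> V" "det x = cis2pi v" "det y = cis2pi w"
    by (auto simp: unitary_det_in_def)
  have "cis2pi (of_rat q * b + v) = cis2pi (of_rat q' * b + w)"
    using arg_cong[OF eq, of det] by (simp add: det_mul det_scalar_unitary vw cis2pi_add)
  then have "(of_rat q * b + v) - (of_rat q' * b + w) \<in> V"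
    using Ints_subset_Rats Rats_subset_V cis2pi_eq_imp_diff_Ints by blast
  then have "of_rat (q - q') * b \<in> V"
    using Q.subspace_diff[OF V(1) _ vw(1)] Q.subspace_add[OF V(1) _ vw(2)]
    by (force simp: of_rat_diff algebra_simps)
  with assms show False
    by (simp add: rat_mult_b_in_V_iff)
qed

lemma translates_det_in_V_cover:
  "unitary_matrices \<subseteq>
     (\<Union>q. (\<lambda>x. scalar_unitary (of_rat q * b) ** x) ` (unitary_det_in (cis2pi ` V) :: (complex^'n^'n) set))"
proof
  fix U :: "complex^'n^'n"
  assume U: "U \<in> unitary_matrices"
  then obtain \<theta> where \<theta>: "det U = cis2pi \<theta>"
    using norm_1_imp_cis2pi norm_det_unitary by metis
  obtain v q where vq: "v \<in> V" "\<theta> = v + of_rat q * b"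
    by (rule V_decompose)
  define W where "W = scalar_unitary (- of_rat q * b) ** U"
  have "W \<in> unitary_det_in (cis2pi ` V)"
    using U vq by (auto simp: W_def unitary_det_in_def scalar_unitary_unitary unitary_mult det_mul
        det_scalar_unitary \<theta> cis2pi_add)
  moreover have "scalar_unitary (of_rat q * b) ** W = U"
    by (simp add: W_def matrix_mul_assoc scalar_unitary_add)
  ultimately show "U \<in> (\<Union>q. (\<lambda>x. scalar_unitary (of_rat q * b) ** x) ` unitary_det_in (cis2pi ` V))"
    by blast
qed

lemma det_in_V_not_in_completion:
  assumes "haar_measure_U \<mu>"
  shows "unitary_det_in (cis2pi ` V) \<notin> sets (completion \<mu>)"
proof (rule translates_partition_not_in_completion[where T = "\<lambda>q x. scalar_unitary (of_rat q * b) ** x"])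
  show "disjoint_family (\<lambda>q::rat. (\<lambda>x. scalar_unitary (of_rat q * b) ** x) ` unitary_det_in (cis2pi ` V))"
    unfolding disjoint_family_on_def using translates_det_in_V_disjoint by blast
  show "space \<mu> \<subseteq> (\<Union>q. (\<lambda>x. scalar_unitary (of_rat q * b) ** x) ` unitary_det_in (cis2pi ` V))"
    using assms translates_det_in_V_cover by (simp add: haar_measure_U_def)
  show "\<And>q A. A \<in> sets \<mu> \<Longrightarrow> (\<lambda>x. scalar_unitary (of_rat q * b) ** x) ` A \<in> sets \<mu>"
    by (rule haar_left_translate_sets[OF assms scalar_unitary_unitary])
  show "\<And>q A. A \<in> sets \<mu> \<Longrightarrow>
      emeasure \<mu> ((\<lambda>x. scalar_unitary (of_rat q * b) ** x) ` A) = emeasure \<mu> A"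
    using assms scalar_unitary_unitary unfolding haar_measure_U_def by blast
qed (use assms scalar_unitary_unitary in \<open>auto simp: haar_measure_U_def infinite_UNIV_char_0\<close>)

end

theorem mainTheorem2:
  shows "\<exists>H :: (complex^'n^'n) set.
           subgroup H unitary_group \<and>
           unitary_matrices \<subseteq> closure H \<and>
           (\<forall>\<mu>. haar_measure_U \<mu> \<longrightarrow> H \<notin> sets (completion \<mu>))"
proof -
  obtain V b where V: "Q.subspace V" "1 \<in> V" "b \<notin> V" "Q.span (insert b V) = UNIV"
    by (rule rational_hyperplane_exists)
  have "unitary_matrices \<subseteq> closure (unitary_det_in (cis2pi ` V))"
    using unitary_matrices_subset_closure_det_in_Rats
      closure_mono[OF unitary_det_in_mono[OF image_mono[OF Rats_subset_V[OF V]]]] by blast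
  then show ?thesis
    using subgroup_unitary_det_in_V[OF V] det_in_V_not_in_completion[OF V] by blast
qed

end
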